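(* Let $n,m$ be positive integers, $P(z)=\sum_{i=0}^{m}\binom{m}{i}\frac{(-1)^{i}}{n+m+1-i} z^{n+m+1-i}+1$ (so $P'(z)=z^n(z-1)^m$), and let $S$ be the set of zeros of $P$. Let $f,g$ be non-constant meromorphic functions on $\mathbb{C}$ with $E_f(S,0)=E_g(S,0)$, put $F=P(f)$, $G=P(g)$, and suppose $$H=\left(\frac{F''}{F'}-\frac{2F'}{F}\right)-\left(\frac{G''}{G'}-\frac{2G'}{G}\right)\not\equiv 0 .$$ Then $$\overline N(r,\infty;H)\leq \overline N(r,0;f)+\overline N(r,1;f)+\overline N(r,0;g)+\overline N(r,1;g)+\overline N_{*}(r,0;F,G)+\overline N(r,\infty;f)+\overline N(r,\infty;g)+\overline N_{0}(r,0;f')+\overline N_{0}(r,0;g').$$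
   Context: $\overline N(r,a;h)$ is the reduced counting function of $a$-points of $h$ (each distinct point counted once). $E_f(S,0)=E_g(S,0)$ means $\bigcup_{a\in S}\{z:f(z)=a\}=\bigcup_{a\in S}\{z:g(z)=a\}$ as sets (multiplicities ignored); then $F$ and $G$ have the same zero set. $\overline N_{*}(r,0;F,G)$ is the reduced counting function of those zeros of $F$ whose multiplicity differs from the multiplicity of the corresponding zero of $G$. $\overline N_{0}(r,0;f')$ is the reduced counting function of those zeros of $f'$ which are not zeros of $F f(f-1)$; $\overline N_{0}(r,0;g')$ is the reduced counting function of zeros of $g'$ which are not zeros of $G g(g-1)$. *)

theory Defs
  imports "HOL-Complex_Analysis.Complex_Analysis"
begin

definition Ppoly :: "nat \<Rightarrow> nat \<Rightarrow> complex \<Rightarrow> complex" where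
  "Ppoly n m z = (\<Sum>i=0..m. of_nat (m choose i) * (-1) ^ i / of_nat (n + m + 1 - i)
                      * z ^ (n + m + 1 - i)) + 1"

definition a_points :: "(complex \<Rightarrow> complex) \<Rightarrow> complex \<Rightarrow> complex set" where
  "a_points h a = {z. \<not> is_pole h z \<and> h z = a}"

definition pole_points :: "(complex \<Rightarrow> complex) \<Rightarrow> complex set" where
  "pole_points h = {z. is_pole h z}"

definition red_count :: "complex set \<Rightarrow> real \<Rightarrow> real" where
  "red_count A r =
     integral {0..r} (\<lambda>t. (real (card (A \<inter> cball 0 t)) - real (card (A \<inter> {0}))) / t)
     + real (card (A \<inter> {0})) * ln r"

text \<open>E_h(S,0): the set of points where h takes a value in S (multiplicities ignored).\<close>
definition E_set :: "(complex \<Rightarrow> complex) \<Rightarrow> complex set \<Rightarrow> complex set" where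
  "E_set h S = {z. \<not> is_pole h z \<and> h z \<in> S}"

end

theory Submission
  imports Defs "HOL-Computational_Algebra.Polynomial"
begin

text \<open>
  For a locally finite set A, the reduced counting function equals the sum of log (r / |a|) over
  the points a of A in the closed disc of radius r (with log r for a = 0). It is therefore
  monotone and subadditive, and it suffices to show that every pole of H lies in one of the nine
  sets on the right, each of which is discrete. Let z avoid all of them. Since f and g share the
  zeros of P, F z = 0 iff G z = 0. If F z \<noteq> 0, then F' z = f z ^ n (f z - 1) ^ m f' z \<noteq> 0, likewise
  for G, so H is analytic at z. Otherwise F and G vanish at z to the same order k, and near a zero
  of order k one has F''/F' - 2 F'/F = \<phi> - (k + 1) / (w - z) with \<phi> holomorphic, so the
  principal parts cancel in H.
\<close>

definition count_weight :: "real \<Rightarrow> complex \<Rightarrow> real" where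
  "count_weight r a = (if a = 0 then ln r else ln (r / norm a))"

lemma count_weight_nonneg:
  assumes "r \<ge> 1" "norm a \<le> r"
  shows "count_weight r a \<ge> 0"
  using assms by (auto simp: count_weight_def le_divide_eq intro!: ln_ge_zero)

lemma has_integral_inverse_from:
  fixes c r :: real
  assumes "0 < c" "c \<le> r"
  shows "((\<lambda>t. if c \<le> t then 1 / t else 0) has_integral (ln r - ln c)) {0..r}"
proof -
  have "((\<lambda>t. 1 / t) has_integral (ln r - ln c)) {c..r}"
  proof (rule fundamental_theorem_of_calculus)
    fix x assume "x \<in> {c..r}"
    with assms have "x > 0" by auto
    thus "(ln has_vector_derivative 1 / x) (at x within {c..r})"
      by (auto intro!: derivative_eq_intros
               simp: has_real_derivative_iff_has_vector_derivative[symmetric])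
  qed (fact assms)
  hence "((\<lambda>t. if t \<in> cbox c r then 1 / t else 0) has_integral (ln r - ln c)) (cbox 0 r)"
    using assms by (intro has_integral_restrict_closed_subinterval) auto
  moreover have "(if t \<in> cbox c r then 1 / t else 0) = (if c \<le> t then 1 / t else 0)"
    if "t \<in> {0..r}" for t
    using that by auto
  ultimately show ?thesis
    unfolding cbox_interval by (rule has_integral_eq[rotated])
qed

lemma red_count_eq_sum_count_weight:
  assumes fin: "finite (A \<inter> cball 0 r)" and r: "r > 0"
  shows "red_count A r = (\<Sum>a\<in>A \<inter> cball 0 r. count_weight r a)"
proof -
  define Z where "Z = A \<inter> {0}"
  define Y where "Y = (A - {0}) \<inter> cball 0 r"
  have finY: "finite Y" using fin unfolding Y_def by (rule finite_subset[rotated]) auto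
  have counting: "(real (card (A \<inter> cball 0 t)) - real (card Z)) / t
                = (\<Sum>a\<in>Y. if norm a \<le> t then 1 / t else 0)" if "t \<in> {0..r}" for t
  proof -
    have "A \<inter> cball 0 t = Z \<union> {a\<in>Y. norm a \<le> t}" "Z \<inter> {a\<in>Y. norm a \<le> t} = {}"
      using that by (auto simp: Y_def Z_def)
    hence "real (card (A \<inter> cball 0 t)) - real (card Z) = real (card {a\<in>Y. norm a \<le> t})"
      using finY by (simp add: card_Un_disjoint Z_def)
    also have "\<dots> = (\<Sum>a\<in>Y. if norm a \<le> t then 1 else 0)"
      using finY by (simp add: sum.inter_filter[symmetric])
    finally have count: "real (card (A \<inter> cball 0 t)) - real (card Z)
                         = (\<Sum>a\<in>Y. if norm a \<le> t then 1 else 0)" .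
    show ?thesis
      unfolding count sum_divide_distrib by (intro sum.cong) auto
  qed
  have integral: "((\<lambda>t. \<Sum>a\<in>Y. if norm a \<le> t then 1 / t else 0)
          has_integral (\<Sum>a\<in>Y. ln r - ln (norm a))) {0..r}"
  proof (rule has_integral_sum[OF finY])
    fix a assume "a \<in> Y"
    hence "0 < norm a" "norm a \<le> r" by (auto simp: Y_def)
    thus "((\<lambda>t. if norm a \<le> t then 1 / t else 0) has_integral (ln r - ln (norm a))) {0..r}"
      by (rule has_integral_inverse_from)
  qed
  have "integral {0..r} (\<lambda>t. (real (card (A \<inter> cball 0 t)) - real (card Z)) / t)
         = (\<Sum>a\<in>Y. ln r - ln (norm a))"
    by (intro integral_unique has_integral_eq[OF _ integral]) (simp add: counting)
  also have "\<dots> = (\<Sum>a\<in>Y. count_weight r a)"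
    using r by (intro sum.cong refl) (auto simp: Y_def count_weight_def ln_div)
  finally have "red_count A r = (\<Sum>a\<in>Y. count_weight r a) + real (card Z) * ln r"
    by (simp add: red_count_def Z_def)
  also have "real (card Z) * ln r = (\<Sum>a\<in>Z. count_weight r a)"
    by (cases "0 \<in> A") (auto simp: Z_def count_weight_def)
  also have "(\<Sum>a\<in>Y. count_weight r a) + (\<Sum>a\<in>Z. count_weight r a)
             = (\<Sum>a\<in>Y \<union> Z. count_weight r a)"
    using finY by (intro sum.union_disjoint[symmetric]) (auto simp: Y_def Z_def)
  also have "Y \<union> Z = A \<inter> cball 0 r"
    using r by (auto simp: Y_def Z_def)
  finally show ?thesis .
qed

lemma red_count_mono:
  assumes "A \<subseteq> B" "finite (B \<inter> cball 0 r)" "r \<ge> 1"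
  shows "red_count A r \<le> red_count B r"
proof -
  have "finite (A \<inter> cball 0 r)"
    using assms(1) by (intro finite_subset[OF _ assms(2)]) auto
  hence "red_count A r = (\<Sum>a\<in>A \<inter> cball 0 r. count_weight r a)"
    using assms(3) by (intro red_count_eq_sum_count_weight) auto
  also have "\<dots> \<le> (\<Sum>a\<in>B \<inter> cball 0 r. count_weight r a)"
    using assms by (intro sum_mono2 count_weight_nonneg) auto
  also have "\<dots> = red_count B r"
    using assms(2,3) by (intro red_count_eq_sum_count_weight[symmetric]) auto
  finally show ?thesis .
qed

lemma red_count_Un_le:
  assumes fin: "finite (A \<inter> cball 0 r)" "finite (B \<inter> cball 0 r)" and r: "r \<ge> 1"
  shows "red_count (A \<union> B) r \<le> red_count A r + red_count B r"
proof -
  let ?A = "A \<inter> cball 0 r" and ?B = "B \<inter> cball 0 r"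
  have "(A \<union> B) \<inter> cball 0 r = ?A \<union> ?B" by auto
  moreover have "finite (?A \<union> ?B)" using fin by simp
  ultimately have "red_count (A \<union> B) r = (\<Sum>a\<in>?A \<union> ?B. count_weight r a)"
    using r by (simp add: red_count_eq_sum_count_weight)
  also have "\<dots> \<le> (\<Sum>a\<in>?A. count_weight r a) + (\<Sum>a\<in>?B. count_weight r a)"
  proof -
    have "(\<Sum>a\<in>?A \<inter> ?B. count_weight r a) \<ge> 0"
      using r by (intro sum_nonneg count_weight_nonneg) auto
    thus ?thesis
      using sum.union_inter[OF fin, of "count_weight r"] by linarith
  qed
  also have "\<dots> = red_count A r + red_count B r"
    using fin r by (simp add: red_count_eq_sum_count_weight)
  finally show ?thesis .
qed

lemma red_count_le_sum_list:
  assumes sub: "A \<subseteq> \<Union>(set Bs)" and fin: "\<forall>B\<in>set Bs. finite (B \<inter> cball 0 r)"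
    and r: "r \<ge> 1"
  shows "red_count A r \<le> (\<Sum>B\<leftarrow>Bs. red_count B r)"
proof -
  have "finite (\<Union>(set Bs) \<inter> cball 0 r) \<and> red_count (\<Union>(set Bs)) r \<le> (\<Sum>B\<leftarrow>Bs. red_count B r)"
    using fin
  proof (induction Bs)
    case Nil
    have "red_count {} r = 0"
      using r by (subst red_count_eq_sum_count_weight) auto
    thus ?case by simp
  next
    case (Cons B Bs)
    hence finB: "finite (B \<inter> cball 0 r)" and IH: "finite (\<Union>(set Bs) \<inter> cball 0 r)"
      "red_count (\<Union>(set Bs)) r \<le> (\<Sum>B\<leftarrow>Bs. red_count B r)"
      by auto
    have "red_count (B \<union> \<Union>(set Bs)) r \<le> red_count B r + red_count (\<Union>(set Bs)) r"
      using finB IH(1) r by (rule red_count_Un_le)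
    moreover have "finite ((B \<union> \<Union>(set Bs)) \<inter> cball 0 r)"
      using finB IH(1) by (simp add: Int_Un_distrib2)
    ultimately show ?case
      using IH(2) by simp
  qed
  thus ?thesis
    using red_count_mono[OF sub _ r] by (meson order.trans)
qed

lemma Ppoly_has_field_derivative:
  "(Ppoly n m has_field_derivative z ^ n * (z - 1) ^ m) (at z)"
proof -
  define N where "N = (\<lambda>i. n + m + 1 - i)"
  define c where "c = (\<lambda>i. of_nat (m choose i) * (-1) ^ i / of_nat (N i) :: complex)"
  have P: "Ppoly n m = (\<lambda>z. (\<Sum>i=0..m. c i * z ^ N i) + 1)"
    by (simp add: fun_eq_iff Ppoly_def c_def N_def)
  have "((\<lambda>z. (\<Sum>i=0..m. c i * z ^ N i) + 1) has_field_derivative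
          (\<Sum>i=0..m. of_nat (N i) * z ^ (N i - 1) * c i)) (at z)"
    by (auto intro!: derivative_eq_intros)
  also have "(\<Sum>i=0..m. of_nat (N i) * z ^ (N i - 1) * c i)
           = (\<Sum>i\<le>m. z ^ n * (of_nat (m choose i) * (-1) ^ i * z ^ (m - i)))"
    unfolding atLeast0AtMost
  proof (intro sum.cong refl)
    fix i assume "i \<in> {..m}"
    hence "N i \<noteq> 0" "N i - 1 = n + (m - i)" by (auto simp: N_def)
    thus "of_nat (N i) * z ^ (N i - 1) * c i = z ^ n * (of_nat (m choose i) * (-1) ^ i * z ^ (m - i))"
      by (simp add: c_def power_add field_simps)
  qed
  also have "\<dots> = z ^ n * (-1 + z) ^ m"
    unfolding binomial_ring sum_distrib_left ..
  finally show ?thesis by (simp add: P)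
qed

lemma analytic_on_Ppoly: "Ppoly n m analytic_on A"
proof -
  have "(\<lambda>z. (\<Sum>i=0..m. of_nat (m choose i) * (-1) ^ i / of_nat (n + m + 1 - i)
                      * z ^ (n + m + 1 - i)) + 1) analytic_on A"
    by (intro analytic_intros)
  thus ?thesis by (simp add: Ppoly_def[abs_def])
qed

lemma finite_Ppoly_roots: "finite {z. Ppoly n m z = 0}"
proof -
  define p :: "complex poly" where
    "p = (\<Sum>i=0..m. monom (of_nat (m choose i) * (-1) ^ i / of_nat (n + m + 1 - i)) (n + m + 1 - i)) + 1"
  have poly_p: "poly p z = Ppoly n m z" for z
    by (simp add: p_def Ppoly_def poly_sum poly_monom)
  have "poly p 0 = 1"
    unfolding poly_p Ppoly_def by (simp add: zero_power)
  hence "p \<noteq> 0" by auto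
  from poly_roots_finite[OF this] show ?thesis by (simp add: poly_p)
qed

lemma deriv_Ppoly_comp:
  assumes "f analytic_on {z}"
  shows "deriv (\<lambda>w. Ppoly n m (f w)) z = f z ^ n * (f z - 1) ^ m * deriv f z"
proof -
  have "(f has_field_derivative deriv f z) (at z)"
    using assms by (rule analytic_derivI)
  from DERIV_chain2[OF Ppoly_has_field_derivative this] show ?thesis
    by (rule DERIV_imp_deriv)
qed

lemma finite_cball_if_subset_sparse:
  fixes A X :: "'a :: heine_borel set"
  assumes "A \<subseteq> X" "X sparse_in UNIV"
  shows "finite (A \<inter> cball c r)"
proof -
  have "X sparse_in cball c r" using assms(2) by (rule sparse_in_subset) auto
  hence "finite (cball c r \<inter> X)" using compact_cball by (rule sparse_in_compact_finite)
  thus ?thesis by (rule finite_subset[rotated]) (use assms(1) in auto)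
qed

lemma nicely_meromorphic_value_sparse:
  assumes "f nicely_meromorphic_on UNIV" "\<not> f constant_on UNIV"
  shows "{z. f z = c} sparse_in UNIV"
proof -
  have "\<not> (\<forall>z. f z = c)" using assms(2) by (auto simp: constant_on_def)
  thus ?thesis
    using nicely_meromorphic_imp_constant_or_avoid[OF assms(1) open_UNIV connected_UNIV, of c]
    by (auto simp: eventually_cosparse)
qed

lemma meromorphic_poles_sparse:
  assumes "f meromorphic_on UNIV"
  shows "{z. is_pole f z} sparse_in UNIV"
  using meromorphic_on_imp_not_pole_cosparse[OF assms] by (simp add: eventually_cosparse)

lemma nicely_meromorphic_deriv_zero_sparse:
  assumes nm: "f nicely_meromorphic_on UNIV" and nc: "\<not> f constant_on UNIV"
  shows "{z. deriv f z = 0} sparse_in UNIV"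
proof -
  have mero: "f meromorphic_on UNIV" using nm by (simp add: nicely_meromorphic_on_def)
  have "eventually (\<lambda>z. deriv f z \<noteq> 0) (cosparse UNIV)"
  proof (rule ccontr)
    assume "\<not> ?thesis"
    hence "eventually (\<lambda>z. deriv f z = 0) (cosparse UNIV)"
      using meromorphic_imp_constant_or_avoid[OF meromorphic_on_deriv[OF mero] open_UNIV connected_UNIV]
      by blast
    with meromorphic_on_imp_not_pole_cosparse[OF mero]
    have "eventually (\<lambda>z. \<not> is_pole f z \<and> deriv f z = 0) (cosparse UNIV)"
      by (rule eventually_conj)
    hence "eventually (\<lambda>z. \<not> is_pole f z \<and> deriv f z = 0) (at 0)"
      by (rule eventually_cosparse_imp_eventually_at) simp
    then obtain e where e: "e > 0"
      and good: "\<And>w. w \<in> ball 0 e - {0} \<Longrightarrow> \<not> is_pole f w \<and> deriv f w = 0"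
      unfolding eventually_at by (auto simp: dist_commute)
    define D where "D = ball (0::complex) e - {0}"
    have "open D" unfolding D_def by (intro open_delete open_ball)
    have "connected D" unfolding D_def by (rule connected_punctured_ball) simp
    have "f analytic_on D"
    proof (rule analytic_on_analytic_at[THEN iffD2], rule ballI)
      fix w assume "w \<in> D"
      hence "\<not> is_pole f w" using good unfolding D_def by blast
      thus "f analytic_on {w}" by (rule nicely_meromorphic_on_imp_analytic_at[OF nm UNIV_I])
    qed
    hence hol: "f holomorphic_on D" by (rule analytic_imp_holomorphic)
    moreover have "f constant_on D"
    proof (rule DERIV_zero_connected_constant_on[where K = "{}"])
      show "continuous_on D f" using hol by (rule holomorphic_on_imp_continuous_on)
      show "\<forall>w\<in>D - {}. (f has_field_derivative 0) (at w)"
      proof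
        fix w assume w: "w \<in> D - {}"
        hence "(f has_field_derivative deriv f w) (at w)"
          using holomorphic_derivI[OF hol \<open>open D\<close>] by simp
        moreover have "deriv f w = 0" using good w unfolding D_def by blast
        ultimately show "(f has_field_derivative 0) (at w)" by simp
      qed
    qed (fact \<open>connected D\<close> \<open>open D\<close> finite.emptyI)+
    moreover have "D \<noteq> {}"
    proof -
      have "of_real (e / 2) \<in> D" using e by (simp add: D_def)
      thus ?thesis by blast
    qed
    ultimately have "f constant_on UNIV"
      by (intro constant_on_extend_nicely_meromorphic_on[OF nm _ \<open>open D\<close> open_UNIV connected_UNIV]) auto
    with nc show False by contradiction
  qed
  thus ?thesis by (simp add: eventually_cosparse)
qed

lemma nicely_meromorphic_Ppoly_comp_zeros_sparse:
  assumes "f nicely_meromorphic_on UNIV" "\<not> f constant_on UNIV"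
  shows "{z. Ppoly n m (f z) = 0} sparse_in UNIV"
proof -
  have "(\<Union>c\<in>{c. Ppoly n m c = 0}. {z. f z = c}) sparse_in UNIV"
    using finite_Ppoly_roots nicely_meromorphic_value_sparse[OF assms]
    by (intro sparse_in_UN_finite)
  thus ?thesis by (rule sparse_in_subset2) auto
qed

lemma finite_a_points_cball:
  assumes "f nicely_meromorphic_on UNIV" "\<not> f constant_on UNIV"
  shows "finite (a_points f c \<inter> cball z r)"
  by (rule finite_cball_if_subset_sparse[OF _ nicely_meromorphic_value_sparse[OF assms, of c]])
     (auto simp: a_points_def)

lemma finite_pole_points_cball:
  assumes "f nicely_meromorphic_on UNIV"
  shows "finite (pole_points f \<inter> cball z r)"
  using assms unfolding nicely_meromorphic_on_def pole_points_def
  by (intro finite_cball_if_subset_sparse[OF _ meromorphic_poles_sparse]) auto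

lemma finite_critical_points_cball:
  assumes "f nicely_meromorphic_on UNIV" "\<not> f constant_on UNIV"
  shows "finite ({z. \<not> is_pole f z \<and> deriv f z = 0 \<and> P z} \<inter> cball c r)"
  by (rule finite_cball_if_subset_sparse[OF _ nicely_meromorphic_deriv_zero_sparse[OF assms]]) auto

lemma finite_Ppoly_comp_zeros_cball:
  assumes "f nicely_meromorphic_on UNIV" "\<not> f constant_on UNIV"
  shows "finite ({z \<in> a_points (\<lambda>z. Ppoly n m (f z)) 0. P z} \<inter> cball c r)"
  by (rule finite_cball_if_subset_sparse[OF _ nicely_meromorphic_Ppoly_comp_zeros_sparse[OF assms]])
     (auto simp: a_points_def)

definition H_summand :: "(complex \<Rightarrow> complex) \<Rightarrow> complex \<Rightarrow> complex" where
  "H_summand F z = deriv (deriv F) z / deriv F z - 2 * deriv F z / F z"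

lemma analytic_at_H_summand:
  assumes "F analytic_on {z}" "F z \<noteq> 0" "deriv F z \<noteq> 0"
  shows "H_summand F analytic_on {z}"
  unfolding H_summand_def[abs_def] using assms by (auto intro!: analytic_intros)

lemma deriv_power_mult_eq:
  assumes "open B" "w \<in> B" "v holomorphic_on B" "\<And>x. x \<in> B \<Longrightarrow> h x = (x - z) ^ j * v x"
  shows "deriv h w = of_nat j * (w - z) ^ (j - 1) * v w + (w - z) ^ j * deriv v w"
proof -
  have "(v has_field_derivative deriv v w) (at w)"
    by (rule holomorphic_derivI[OF assms(3,1,2)])
  hence "((\<lambda>x. (x - z) ^ j * v x) has_field_derivative
          of_nat j * (w - z) ^ (j - 1) * v w + (w - z) ^ j * deriv v w) (at w)"
    by (auto intro!: derivative_eq_intros)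
  hence "(h has_field_derivative of_nat j * (w - z) ^ (j - 1) * v w + (w - z) ^ j * deriv v w) (at w)"
    by (rule has_field_derivative_transform_within_open[OF _ assms(1,2)]) (simp add: assms(4))
  thus ?thesis by (rule DERIV_imp_deriv)
qed

lemma power_mult_log_deriv_eq:
  fixes x v v' :: "'a :: field"
  assumes "x \<noteq> 0" "v \<noteq> 0"
  shows "(of_nat j * x ^ (j - 1) * v + x ^ j * v') / (x ^ j * v) = of_nat j / x + v' / v"
  using assms by (cases j) (simp_all add: field_simps)

lemma analytic_zero_factorization:
  fixes F :: "complex \<Rightarrow> complex"
  assumes "F analytic_on {z}" "F z = 0" "frequently (\<lambda>w. F w \<noteq> 0) (at z)"
  obtains u r where "r > 0" "u holomorphic_on ball z r" "zorder F z > 0"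
    "\<And>w. w \<in> ball z r \<Longrightarrow> F w = (w - z) ^ nat (zorder F z) * u w \<and> u w \<noteq> 0"
proof -
  obtain \<epsilon> where \<epsilon>: "\<epsilon> > 0" "F holomorphic_on ball z \<epsilon>"
    using assms(1) analytic_at_ball by blast
  have "frequently (\<lambda>w. F w \<noteq> 0 \<and> w \<in> ball z \<epsilon>) (at z)"
    using frequently_eventually_frequently[OF assms(3) eventually_at_in_open'[of "ball z \<epsilon>" z]] \<epsilon>
    by auto
  from frequently_ex[OF this] have "\<exists>w\<in>ball z \<epsilon>. F w \<noteq> 0" by blast
  from zorder_exist_zero[OF \<epsilon>(2) open_ball connected_ball centre_in_ball[THEN iffD2, OF \<epsilon>(1)] this]
       assms(2)
  obtain r where "zorder F z > 0" "r > 0" "zor_poly F z holomorphic_on cball z r"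
    "\<forall>w\<in>cball z r. F w = zor_poly F z w * (w - z) ^ nat (zorder F z) \<and> zor_poly F z w \<noteq> 0"
    by auto
  thus ?thesis
    by (intro that[of r "zor_poly F z"]) (auto simp: mult.commute intro: holomorphic_on_subset)
qed

lemma H_summand_at_zero:
  fixes F :: "complex \<Rightarrow> complex"
  assumes "F analytic_on {z}" "F z = 0" "frequently (\<lambda>w. F w \<noteq> 0) (at z)"
  obtains \<phi> where "\<phi> analytic_on {z}"
    "eventually (\<lambda>w. H_summand F w = \<phi> w - (of_int (zorder F z) + 1) / (w - z)) (at z)"
proof -
  obtain u r where r: "r > 0" and u: "u holomorphic_on ball z r" and ord: "zorder F z > 0"
    and F: "\<And>w. w \<in> ball z r \<Longrightarrow> F w = (w - z) ^ nat (zorder F z) * u w \<and> u w \<noteq> 0"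
    using analytic_zero_factorization[OF assms] by blast
  define k where "k = nat (zorder F z)"
  have k: "k \<ge> 1" "of_int (zorder F z) = (of_nat k :: complex)" using ord by (auto simp: k_def)
  have dF: "deriv F w = of_nat k * (w - z) ^ (k - 1) * u w + (w - z) ^ k * deriv u w"
    if "w \<in> ball z r" for w
    using F that by (intro deriv_power_mult_eq[OF open_ball _ u]) (auto simp: k_def)
  \<comment> \<open>\<open>F' = (w - z) ^ (k - 1) * v\<close> with \<open>v z = k * u z \<noteq> 0\<close>:
     the residues of \<open>F''/F'\<close> and \<open>F'/F\<close> are \<open>k - 1\<close> and \<open>k\<close>.\<close>
  define v where "v = (\<lambda>w. of_nat k * u w + (w - z) * deriv u w)"
  have v: "v holomorphic_on ball z r" unfolding v_def using u by (auto intro!: holomorphic_intros)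
  have dF': "deriv F w = (w - z) ^ (k - 1) * v w" if "w \<in> ball z r" for w
  proof -
    have pow: "(w - z) ^ k = (w - z) ^ (k - 1) * (w - z)"
      using k(1) by (simp add: power_eq_if)
    show ?thesis unfolding dF[OF that] pow v_def by (simp only: distrib_left mult_ac)
  qed
  have "v z \<noteq> 0" using F[of z] k(1) r by (simp add: v_def)
  moreover have "isCont v z"
    using v r by (intro continuous_on_interior[OF holomorphic_on_imp_continuous_on]) auto
  ultimately obtain e0 where "e0 > 0" "\<And>w. dist z w < e0 \<Longrightarrow> v w \<noteq> 0"
    using continuous_at_avoid by blast
  then obtain e where e: "e > 0" "e \<le> r" and vnz: "\<And>w. w \<in> ball z e \<Longrightarrow> v w \<noteq> 0"
    using r by (intro that[of "min r e0"]) auto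
  have ball_e: "ball z e \<subseteq> ball z r" using e by auto
  have ddF: "deriv (deriv F) w = of_nat (k - 1) * (w - z) ^ (k - 1 - 1) * v w + (w - z) ^ (k - 1) * deriv v w"
    if "w \<in> ball z e" for w
    using dF' ball_e that by (intro deriv_power_mult_eq[OF open_ball _ holomorphic_on_subset[OF v ball_e]]) auto
  define \<phi> where "\<phi> = (\<lambda>w. deriv v w / v w - 2 * (deriv u w / u w))"
  show ?thesis
  proof
    have "\<phi> holomorphic_on ball z e"
      unfolding \<phi>_def using v u ball_e vnz F
      by (auto intro!: holomorphic_intros intro: holomorphic_on_subset)
    thus "\<phi> analytic_on {z}" using e(1) analytic_at_ball by blast
    have "eventually (\<lambda>w. w \<in> ball z e - {z}) (at z)"
      by (rule eventually_at_in_open) (use e in auto)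
    thus "eventually (\<lambda>w. H_summand F w = \<phi> w - (of_int (zorder F z) + 1) / (w - z)) (at z)"
    proof eventually_elim
      case (elim w)
      hence w: "w \<in> ball z e" "w \<in> ball z r" "w - z \<noteq> 0" using ball_e by auto
      have q1: "deriv (deriv F) w / deriv F w = of_nat (k - 1) / (w - z) + deriv v w / v w"
        unfolding ddF[OF w(1)] dF'[OF w(2)] using w vnz by (intro power_mult_log_deriv_eq) auto
      have q2: "deriv F w / F w = of_nat k / (w - z) + deriv u w / u w"
        unfolding dF[OF w(2)] F[OF w(2), THEN conjunct1, folded k_def]
        using w F by (intro power_mult_log_deriv_eq) auto
      have q3: "(of_nat (k - 1) :: complex) = of_nat k - 1" using k(1) by (simp add: of_nat_diff)
      have "H_summand F w = ((of_nat k - 1) / (w - z) + deriv v w / v w)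
                                      - 2 * (of_nat k / (w - z) + deriv u w / u w)"
        unfolding H_summand_def times_divide_eq_right[symmetric] q1 q2 q3 ..
      also have "\<dots> = \<phi> w - (of_int (zorder F z) + 1) / (w - z)"
      proof -
        have "(c - 1) / x + a - 2 * (c / x + b) = a - 2 * b - (c + 1) / x"
          if "x \<noteq> 0" for x c a b :: complex
          using that by (simp add: field_simps)
        from this[OF w(3)] show ?thesis unfolding \<phi>_def k(2) .
      qed
      finally show ?case .
    qed
  qed
qed

lemma not_pole_H_summand_diff_at_common_zero:
  assumes "F analytic_on {z}" "F z = 0" "frequently (\<lambda>w. F w \<noteq> 0) (at z)"
    and "G analytic_on {z}" "G z = 0" "frequently (\<lambda>w. G w \<noteq> 0) (at z)"
    and "zorder F z = zorder G z"
  shows "\<not> is_pole (\<lambda>w. H_summand F w - H_summand G w) z"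
proof -
  obtain \<phi> where \<phi>: "\<phi> analytic_on {z}"
    "eventually (\<lambda>w. H_summand F w = \<phi> w - (of_int (zorder F z) + 1) / (w - z)) (at z)"
    using H_summand_at_zero[OF assms(1-3)] by blast
  obtain \<psi> where \<psi>: "\<psi> analytic_on {z}"
    "eventually (\<lambda>w. H_summand G w = \<psi> w - (of_int (zorder G z) + 1) / (w - z)) (at z)"
    using H_summand_at_zero[OF assms(4-6)] by blast
  have "eventually (\<lambda>w. H_summand F w - H_summand G w = \<phi> w - \<psi> w) (at z)"
    using \<phi>(2) \<psi>(2) by eventually_elim (simp add: assms(7))
  hence "is_pole (\<lambda>w. H_summand F w - H_summand G w) z \<longleftrightarrow> is_pole (\<lambda>w. \<phi> w - \<psi> w) z"
    by (rule is_pole_cong) (rule refl)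
  moreover have "\<not> is_pole (\<lambda>w. \<phi> w - \<psi> w) z"
    using \<phi>(1) \<psi>(1) by (intro analytic_at_imp_no_pole analytic_intros)
  ultimately show ?thesis by blast
qed

lemma not_pole_H_summand_diff:
  fixes n m :: nat and f g :: "complex \<Rightarrow> complex"
  defines "F \<equiv> \<lambda>z. Ppoly n m (f z)" and "G \<equiv> \<lambda>z. Ppoly n m (g z)"
  assumes nmf: "f nicely_meromorphic_on UNIV" and ncf: "\<not> f constant_on UNIV"
    and nmg: "g nicely_meromorphic_on UNIV" and ncg: "\<not> g constant_on UNIV"
    and E: "E_set f {c. Ppoly n m c = 0} = E_set g {c. Ppoly n m c = 0}"
    and pf: "\<not> is_pole f z" and pg: "\<not> is_pole g z"
    and f01: "f z \<noteq> 0" "f z \<noteq> 1" and g01: "g z \<noteq> 0" "g z \<noteq> 1"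
    and df: "F z \<noteq> 0 \<Longrightarrow> deriv f z \<noteq> 0" and dg: "G z \<noteq> 0 \<Longrightarrow> deriv g z \<noteq> 0"
    and same_order: "z \<in> a_points F 0 \<Longrightarrow> zorder F z = zorder G z"
  shows "\<not> is_pole (\<lambda>w. H_summand F w - H_summand G w) z"
proof -
  have af: "f analytic_on {z}" and ag: "g analytic_on {z}"
    using nicely_meromorphic_on_imp_analytic_at nmf nmg pf pg by blast+
  have aF: "F analytic_on {z}" and aG: "G analytic_on {z}"
    unfolding F_def G_def using analytic_on_compose[OF af analytic_on_Ppoly]
      analytic_on_compose[OF ag analytic_on_Ppoly] by (simp_all add: o_def)
  have "z \<in> E_set f {c. Ppoly n m c = 0} \<longleftrightarrow> z \<in> E_set g {c. Ppoly n m c = 0}"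
    using E by simp
  hence FG: "F z = 0 \<longleftrightarrow> G z = 0" using pf pg by (simp add: E_set_def F_def G_def)
  show ?thesis
  proof (cases "F z = 0")
    case False
    have "deriv F z \<noteq> 0" "deriv G z \<noteq> 0"
      using df dg False FG f01 g01 deriv_Ppoly_comp[OF af] deriv_Ppoly_comp[OF ag]
      by (simp_all add: F_def G_def)
    hence "(\<lambda>w. H_summand F w - H_summand G w) analytic_on {z}"
      using False FG by (intro analytic_intros analytic_at_H_summand aF aG) auto
    thus ?thesis by (rule analytic_at_imp_no_pole)
  next
    case True
    have "frequently (\<lambda>w. F w \<noteq> 0) (at z)" "frequently (\<lambda>w. G w \<noteq> 0) (at z)"
    proof -
      have "eventually (\<lambda>w. F w \<noteq> 0) (cosparse UNIV)" "eventually (\<lambda>w. G w \<noteq> 0) (cosparse UNIV)"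
        using nicely_meromorphic_Ppoly_comp_zeros_sparse[OF nmf ncf]
          nicely_meromorphic_Ppoly_comp_zeros_sparse[OF nmg ncg]
        by (simp_all add: eventually_cosparse F_def G_def)
      thus "frequently (\<lambda>w. F w \<noteq> 0) (at z)" "frequently (\<lambda>w. G w \<noteq> 0) (at z)"
        by (auto intro!: eventually_frequently dest: eventually_cosparse_imp_eventually_at[of _ _ z])
    qed
    moreover have "zorder F z = zorder G z"
      using True aF same_order by (simp add: a_points_def analytic_at_imp_no_pole)
    ultimately show ?thesis
      using True FG aF aG by (intro not_pole_H_summand_diff_at_common_zero) auto
  qed
qed

theorem lemma2p3:
  fixes n m :: nat and f g :: "complex \<Rightarrow> complex" and r :: real
  assumes "n > 0" and "m > 0"
    and "f nicely_meromorphic_on UNIV" and "g nicely_meromorphic_on UNIV"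
    and "\<not> f constant_on UNIV" and "\<not> g constant_on UNIV"
    and "E_set f {z. Ppoly n m z = 0} = E_set g {z. Ppoly n m z = 0}"
    and "F = (\<lambda>z. Ppoly n m (f z))" and "G = (\<lambda>z. Ppoly n m (g z))"
    and "H = (\<lambda>z. (deriv (deriv F) z / deriv F z - 2 * deriv F z / F z)
                 - (deriv (deriv G) z / deriv G z - 2 * deriv G z / G z))"
    and "\<exists>z0. \<exists>\<^sub>F w in at z0. H w \<noteq> 0"
    and "r \<ge> 1"
  shows "red_count (pole_points H) r
    \<le> red_count (a_points f 0) r + red_count (a_points f 1) r
     + red_count (a_points g 0) r + red_count (a_points g 1) r
     + red_count {z \<in> a_points F 0. zorder F z \<noteq> zorder G z} r
     + red_count (pole_points f) r + red_count (pole_points g) r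
     + red_count {z. \<not> is_pole f z \<and> deriv f z = 0 \<and> F z \<noteq> 0 \<and> f z \<noteq> 0 \<and> f z \<noteq> 1} r
     + red_count {z. \<not> is_pole g z \<and> deriv g z = 0 \<and> G z \<noteq> 0 \<and> g z \<noteq> 0 \<and> g z \<noteq> 1} r"
proof -
  note nmf = assms(3) and nmg = assms(4) and ncf = assms(5) and ncg = assms(6)
  define Bs where "Bs =
    [a_points f 0, a_points f 1, a_points g 0, a_points g 1,
     {z \<in> a_points F 0. zorder F z \<noteq> zorder G z}, pole_points f, pole_points g,
     {z. \<not> is_pole f z \<and> deriv f z = 0 \<and> F z \<noteq> 0 \<and> f z \<noteq> 0 \<and> f z \<noteq> 1},
     {z. \<not> is_pole g z \<and> deriv g z = 0 \<and> G z \<noteq> 0 \<and> g z \<noteq> 0 \<and> g z \<noteq> 1}]"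
  have H: "H = (\<lambda>w. H_summand F w - H_summand G w)"
    using assms(10) by (simp add: fun_eq_iff H_summand_def)
  have "pole_points H \<subseteq> \<Union>(set Bs)"
  proof
    fix z assume "z \<in> pole_points H"
    hence "is_pole (\<lambda>w. H_summand F w - H_summand G w) z" by (simp add: H pole_points_def)
    with not_pole_H_summand_diff[OF nmf ncf nmg ncg assms(7), of z] show "z \<in> \<Union>(set Bs)"
      by (auto simp: Bs_def pole_points_def a_points_def assms(8,9))
  qed
  moreover have "\<forall>B\<in>set Bs. finite (B \<inter> cball 0 r)"
    using finite_a_points_cball[OF nmf ncf] finite_a_points_cball[OF nmg ncg]
      finite_pole_points_cball[OF nmf] finite_pole_points_cball[OF nmg]
      finite_critical_points_cball[OF nmf ncf] finite_critical_points_cball[OF nmg ncg]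
      finite_Ppoly_comp_zeros_cball[OF nmf ncf]
    by (simp add: Bs_def assms(8,9))
  ultimately have "red_count (pole_points H) r \<le> (\<Sum>B\<leftarrow>Bs. red_count B r)"
    using assms(12) by (rule red_count_le_sum_list)
  thus ?thesis by (simp add: Bs_def add.assoc)
qed

end
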